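(* Let $k\ge2$ and consider the edge reinforced random walk on the even cycle $\mathcal G_{2k}$ with weight function $W:\mathbb N\to(0,\infty)$ satisfying $\sum_{m\in\mathbb N}\frac1{W(m)}<\infty$, arbitrary initial edge weights $X_0^e\in\mathbb N$ and arbitrary starting vertex. Then almost surely at least one edge of $\mathcal G_{2k}$ is traversed only finitely often, i.e. $\mathbb P(\text{all edges of }\mathcal G_{2k}\text{ are traversed infinitely often})=0$.
   Context: $\mathbb N=\{0,1,2,\ldots\}$. For $l\ge 3$, the cycle $\mathcal G_l$ has vertices $\{0,1,\ldots,l-1\}$ and edges $e_i=\{i,i+1\}$, $i=0,\ldots,l-1$, with addition modulo $l$. Edge reinforced random walk (ERRW) on a connected graph $\mathcal G$ of bounded degree: given a weight function $W:\mathbb N\to(0,\infty)$, initial edge weights $X_0^e\in\mathbb N$, and a starting vertex $I_0=v_0$, the process $(I_n)_{n\ge0}$ with natural filtration $(\mathcal F_n)$ jumps at each step to a neighbour of its current vertex with $\mathbb P(I_{n+1}=v'\mid\mathcal F_n)1_{\{I_n=v\}}=\frac{W(X_n^{\{v,v'\}})}{\sum_{w\sim v}W(X_n^{\{v,w\}})}1_{\{I_n=v\sim v'\}}$, where $X_n^e=X_0^e+\sum_{j=0}^{n-1}1_{\{\{I_j,I_{j+1}\}=e\}}$. *)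

theory Defs
  imports "HOL-Probability.Probability"
begin

definition cyc_adj :: "nat \<Rightarrow> nat \<Rightarrow> nat \<Rightarrow> bool" where
  "cyc_adj l v w \<longleftrightarrow> v < l \<and> w < l \<and> (w = Suc v mod l \<or> v = Suc w mod l)"

definition cyc_edge :: "nat \<Rightarrow> nat \<Rightarrow> nat set" where
  "cyc_edge l i = {i, Suc i mod l}"

definition edge_idx :: "nat \<Rightarrow> nat \<Rightarrow> nat \<Rightarrow> nat" where
  "edge_idx l v w = (if w = Suc v mod l then v else w)"

text \<open>X_n^{e_i} along a path h: initial weight plus number of traversals before time n.\<close>
definition errw_count :: "(nat \<Rightarrow> nat) \<Rightarrow> nat \<Rightarrow> (nat \<Rightarrow> nat) \<Rightarrow> nat \<Rightarrow> nat \<Rightarrow> nat" where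
  "errw_count X0 l h n i = X0 i + card {j. j < n \<and> {h j, h (Suc j)} = cyc_edge l i}"

definition errw_trans :: "(nat \<Rightarrow> real) \<Rightarrow> (nat \<Rightarrow> nat) \<Rightarrow> nat \<Rightarrow> (nat \<Rightarrow> nat) \<Rightarrow> nat \<Rightarrow> nat \<Rightarrow> real" where
  "errw_trans W X0 l h n w =
     (if cyc_adj l (h n) w
      then W (errw_count X0 l h n (edge_idx l (h n) w)) /
           (\<Sum>u\<in>{u. cyc_adj l (h n) u}. W (errw_count X0 l h n (edge_idx l (h n) u)))
      else 0)"

end

theory Submission
  imports Defs
begin

text \<open>
  The proof is a characteristic-function form of Rubin's exponential embedding.  For real \<open>t\<close>
  and an edge \<open>i\<close> let \<open>\<psi> t i x\<close> be the tail product over \<open>m \<ge> x\<close> of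
  \<open>W m / (W m + \<i> t (-1)^i)\<close> (\<open>tail_cf\<close>).  It converges, has modulus at most 1, tends to 1 as
  \<open>x \<rightarrow> \<infinity>\<close> and is bounded by \<open>W x / t\<close>.  Since the signs \<open>(-1)^i\<close> alternate around each
  vertex of an even cycle, a two-term identity shows that \<open>G_n = \<Prod>i. \<psi> t i (X_n^e_i)\<close>
  (\<open>errw_cf\<close>) is harmonic for the walk.  For any path-dependent chain on finitely many states
  (locale \<open>path_chain\<close>) harmonic functionals have constant expectation, so \<open>E G_n = G_0\<close>.
  Letting \<open>n \<rightarrow> \<infinity>\<close> by dominated convergence, edges crossed infinitely often contribute the
  factor 1; letting then \<open>t = N \<rightarrow> \<infinity>\<close>, the limit becomes the indicator of the event that all
  edges are crossed infinitely often, while \<open>G_0 \<rightarrow> 0\<close>.  Hence that event is null.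
\<close>

text \<open>Characteristic function at \<open>-t (-1)^i\<close> of an exponential time of rate \<open>W m\<close>.\<close>
definition exp_cf :: "(nat \<Rightarrow> real) \<Rightarrow> real \<Rightarrow> nat \<Rightarrow> nat \<Rightarrow> complex" where
  "exp_cf W t i m = of_real (W m) / (of_real (W m) + \<i> * of_real (t * (-1)^i))"

definition tail_cf :: "(nat \<Rightarrow> real) \<Rightarrow> real \<Rightarrow> nat \<Rightarrow> nat \<Rightarrow> complex" where
  "tail_cf W t i x = prodinf (exp_cf W t i) / (\<Prod>m<x. exp_cf W t i m)"

lemma exp_cf_denominator:
  assumes "w > 0"
  shows "cmod (of_real w + \<i> * of_real s) \<ge> w" and "cmod (of_real w + \<i> * of_real s) \<ge> \<bar>s\<bar>"
    and "of_real w + \<i> * of_real s \<noteq> (0 :: complex)"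
proof -
  have e: "of_real w + \<i> * of_real s = Complex w s"
    by (simp add: complex_eq_iff)
  show "cmod (of_real w + \<i> * of_real s) \<ge> w" "cmod (of_real w + \<i> * of_real s) \<ge> \<bar>s\<bar>"
    unfolding e using abs_Re_le_cmod[of "Complex w s"] abs_Im_le_cmod[of "Complex w s"] by simp_all
  show "of_real w + \<i> * of_real s \<noteq> (0 :: complex)"
    unfolding e using assms by (simp add: complex_eq_iff)
qed

lemma exp_cf_nonzero: "W m > 0 \<Longrightarrow> exp_cf W t i m \<noteq> 0"
  unfolding exp_cf_def using exp_cf_denominator(3)[of "W m" "t * (-1)^i"] by simp

lemma exp_cf_norm_le_1: "W m > 0 \<Longrightarrow> cmod (exp_cf W t i m) \<le> 1"
  unfolding exp_cf_def using exp_cf_denominator(1)[of "W m" "t * (-1)^i"]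
  by (simp add: norm_divide divide_le_eq)

lemma exp_cf_norm_le_over_t:
  assumes "W m > 0" "t \<noteq> 0"
  shows "cmod (exp_cf W t i m) \<le> W m / \<bar>t\<bar>"
proof -
  have "\<bar>t\<bar> \<le> cmod (of_real (W m) + \<i> * of_real (t * (-1)^i))"
    using exp_cf_denominator(2)[of "W m" "t * (-1)^i"] assms(1) by (simp add: abs_mult)
  then show ?thesis
    unfolding exp_cf_def using assms by (simp add: norm_divide frac_le)
qed

text \<open>The factors are \<open>1 + O(1 / W m)\<close>; with \<open>\<Sum> 1 / W m < \<infinity>\<close> the infinite product converges.\<close>
lemma exp_cf_dist_1:
  assumes "W m > 0"
  shows "cmod (exp_cf W t i m - 1) \<le> \<bar>t\<bar> * (1 / W m)"
proof -
  let ?d = "of_real (W m) + \<i> * of_real (t * (-1)^i) :: complex"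
  have d: "?d \<noteq> 0" "W m \<le> cmod ?d" using exp_cf_denominator[of "W m" "t * (-1)^i"] assms by auto
  have "exp_cf W t i m - 1 = - (\<i> * of_real (t * (-1)^i)) / ?d"
    unfolding exp_cf_def using d by (simp add: field_simps)
  then have "cmod (exp_cf W t i m - 1) = \<bar>t\<bar> / cmod ?d"
    by (simp add: norm_divide norm_mult abs_mult norm_power)
  also have "\<dots> \<le> \<bar>t\<bar> / W m" using d assms by (intro divide_left_mono) auto
  finally show ?thesis by simp
qed

lemma exp_cf_convergent_prod:
  assumes W: "\<forall>m. W m > 0" and S: "summable (\<lambda>m. 1 / W m)"
  shows "convergent_prod (exp_cf W t i)"
proof -
  have "summable (\<lambda>m. cmod (exp_cf W t i m - 1))"
    by (rule summable_comparison_test[OF _ summable_mult[OF S, of "\<bar>t\<bar>"]])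
       (use exp_cf_dist_1 W in auto)
  then show ?thesis
    by (intro abs_convergent_prod_imp_convergent_prod summable_imp_abs_convergent_prod)
qed

lemma exp_cf_partial_prods:
  assumes "\<forall>m. W m > 0" "summable (\<lambda>m. 1 / W m)"
  shows "(\<lambda>n. \<Prod>m<n. exp_cf W t i m) \<longlonglongrightarrow> prodinf (exp_cf W t i)"
  by (rule has_prod_imp_tendsto'[OF convergent_prod_has_prod[OF exp_cf_convergent_prod[OF assms]]])

lemma tail_cf_step:
  assumes "\<forall>m. W m > 0"
  shows "tail_cf W t i x = exp_cf W t i x * tail_cf W t i (Suc x)"
  unfolding tail_cf_def using exp_cf_nonzero assms by (simp add: field_simps)

text \<open>Tails of a convergent product with nonzero limit tend to 1.\<close>
lemma tail_cf_tendsto_1: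
  assumes W: "\<forall>m. W m > 0" and S: "summable (\<lambda>m. 1 / W m)"
  shows "(\<lambda>x. tail_cf W t i x) \<longlonglongrightarrow> 1"
proof -
  have P: "prodinf (exp_cf W t i) \<noteq> 0"
    using prodinf_nonzero[OF exp_cf_convergent_prod[OF W S]] exp_cf_nonzero W by auto
  have "(\<lambda>x. prodinf (exp_cf W t i) / (\<Prod>m<x. exp_cf W t i m))
          \<longlonglongrightarrow> prodinf (exp_cf W t i) / prodinf (exp_cf W t i)"
    by (intro tendsto_divide tendsto_const exp_cf_partial_prods[OF W S] P)
  then show ?thesis using P unfolding tail_cf_def by simp
qed

lemma tail_cf_norm_le_1:
  assumes W: "\<forall>m. W m > 0" and S: "summable (\<lambda>m. 1 / W m)"
  shows "cmod (tail_cf W t i x) \<le> 1"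
proof -
  have "(\<Prod>m<n. cmod (exp_cf W t i m)) \<le> (\<Prod>m<x. cmod (exp_cf W t i m))" if "x \<le> n" for n
  proof -
    have "{..<n} = {..<x} \<union> {x..<n}" using that by auto
    then have "(\<Prod>m<n. cmod (exp_cf W t i m))
        = (\<Prod>m<x. cmod (exp_cf W t i m)) * (\<Prod>m\<in>{x..<n}. cmod (exp_cf W t i m))"
      by (metis prod.union_disjoint finite_lessThan finite_atLeastLessThan
          ivl_disj_int_one(2))
    also have "\<dots> \<le> (\<Prod>m<x. cmod (exp_cf W t i m)) * 1"
      using W exp_cf_norm_le_1 by (intro mult_left_mono prod_le_1 prod_nonneg) auto
    finally show ?thesis by simp
  qed
  then have "\<forall>\<^sub>F n in sequentially. cmod (\<Prod>m<n. exp_cf W t i m) \<le> (\<Prod>m<x. cmod (exp_cf W t i m))"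
    unfolding eventually_sequentially prod_norm by blast
  then have "cmod (prodinf (exp_cf W t i)) \<le> (\<Prod>m<x. cmod (exp_cf W t i m))"
    by (rule tendsto_upperbound[OF tendsto_norm[OF exp_cf_partial_prods[OF W S]]]) simp
  moreover have "(\<Prod>m<x. cmod (exp_cf W t i m)) > 0"
    using exp_cf_nonzero W by (intro prod_pos) auto
  ultimately show ?thesis unfolding tail_cf_def norm_divide prod_norm[symmetric] by simp
qed

text \<open>For a fixed start \<open>x\<close>, the tail product vanishes as the parameter grows: \<open>|\<psi>| \<le> W x / t\<close>.\<close>
lemma tail_cf_decay:
  assumes W: "\<forall>m. W m > 0" and S: "summable (\<lambda>m. 1 / W m)"
  shows "(\<lambda>N. tail_cf W (real N) i x) \<longlonglongrightarrow> 0"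
proof (rule Lim_null_comparison)
  have "cmod (tail_cf W (real N) i x) \<le> W x / real N" if "N \<ge> 1" for N
  proof -
    have "cmod (tail_cf W (real N) i x) \<le> cmod (exp_cf W (real N) i x) * 1"
      unfolding tail_cf_step[OF W, of _ i x] norm_mult
      using tail_cf_norm_le_1[OF W S] by (intro mult_left_mono) auto
    also have "\<dots> \<le> W x / real N" using W that exp_cf_norm_le_over_t[of W x "real N"] by simp
    finally show ?thesis .
  qed
  then show "\<forall>\<^sub>F N in sequentially. norm (tail_cf W (real N) i x) \<le> W x / real N"
    unfolding eventually_sequentially by blast
  show "(\<lambda>N. W x / real N) \<longlonglongrightarrow> 0" by (rule lim_const_over_n)
qed

lemma Suc_mod_eq: "(w::nat) < l \<Longrightarrow> Suc w mod l = (if Suc w = l then 0 else Suc w)"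
  by (cases "Suc w = l") auto

lemma cyc_pred_eq:
  assumes "(v::nat) < l"
  shows "(v + l - 1) mod l = (if v = 0 then l - 1 else v - 1)"
proof (cases "v = 0")
  case False
  then have "v + l - 1 = v - 1 + l" by arith
  then have "(v + l - 1) mod l = (v - 1 + l) mod l" by simp
  also have "\<dots> = v - 1" using assms by simp
  finally show ?thesis using False by simp
qed (use assms in simp)

lemma cyc_vertex_neighbourhood:
  assumes l3: "3 \<le> l" and vl: "v < l"
  defines "r \<equiv> Suc v mod l" and "p \<equiv> (v + l - 1) mod l"
  shows "r < l" "p < l" "r \<noteq> p" "p \<noteq> v"
    and "cyc_adj l v w \<longleftrightarrow> w = r \<or> w = p"
    and "edge_idx l v r = v" "edge_idx l v p = p"
    and "{v, r} = cyc_edge l i \<longleftrightarrow> i = v"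
    and "{v, p} = cyc_edge l i \<longleftrightarrow> i = p"
    and "even l \<Longrightarrow> (-1::real) ^ p = - ((-1) ^ v)"
proof -
  have r: "r = (if Suc v = l then 0 else Suc v)" unfolding r_def using Suc_mod_eq[OF vl] .
  have p: "p = (if v = 0 then l - 1 else v - 1)" unfolding p_def using cyc_pred_eq[OF vl] .
  show rl: "r < l" and pl: "p < l" and "r \<noteq> p" and "p \<noteq> v"
    using r p l3 vl by auto
  have vp: "v = Suc p mod l" using p vl Suc_mod_eq[OF pl] by auto
  have pred: "v = Suc w mod l \<longleftrightarrow> w = p" if "w < l" for w
    using p vl that Suc_mod_eq[OF that] by auto
  show "cyc_adj l v w \<longleftrightarrow> w = r \<or> w = p"
    unfolding cyc_adj_def using pred vl rl pl r_def by auto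
  show "edge_idx l v r = v" "edge_idx l v p = p"
    unfolding edge_idx_def r_def using \<open>r \<noteq> p\<close> r_def by auto
  have edge_eq: "cyc_edge l i = cyc_edge l j \<longleftrightarrow> i = j" if "i < l" "j < l" for i j
    using that l3 Suc_mod_eq[OF that(1)] Suc_mod_eq[OF that(2)]
    unfolding cyc_edge_def by (auto simp: doubleton_eq_iff split: if_splits)
  have in_range: "i < l" if "{v, w} = cyc_edge l i" "w < l" for i w
  proof -
    have "i \<in> {v, w}" unfolding that(1) cyc_edge_def by simp
    then show ?thesis using vl that(2) by auto
  qed
  have ev: "cyc_edge l v = {v, r}" unfolding cyc_edge_def r_def ..
  have ep: "cyc_edge l p = {v, p}" unfolding cyc_edge_def vp[symmetric] by auto
  show "{v, r} = cyc_edge l i \<longleftrightarrow> i = v"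
    using edge_eq[OF vl, of i] in_range[OF _ rl, of i] ev by auto
  show "{v, p} = cyc_edge l i \<longleftrightarrow> i = p"
    using edge_eq[OF pl, of i] in_range[OF _ pl, of i] ep by auto
  show "even l \<Longrightarrow> (-1::real) ^ p = - ((-1) ^ v)"
    using p l3 by (cases v) auto
qed

text \<open>Bookkeeping of one step of the walk from \<open>v\<close> with crossing counts \<open>c\<close>: it moves to
  \<open>v + 1\<close> across edge \<open>e_v\<close> with probability proportional to \<open>W (c v)\<close>, and to \<open>v - 1\<close> across
  edge \<open>e_p\<close> with probability proportional to \<open>W (c p)\<close>; the crossed edge gets one more count.\<close>
lemma cyc_step_two_neighbours:
  fixes G :: "(nat \<Rightarrow> nat) \<Rightarrow> complex"
  assumes l3: "3 \<le> l" and vl: "v < l"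
  defines "p \<equiv> (v + l - 1) mod l"
  shows "(\<Sum>w<l. G (\<lambda>i. c i + (if {v, w} = cyc_edge l i then 1 else 0)) *
            of_real (if cyc_adj l v w then W (c (edge_idx l v w)) /
               (\<Sum>u\<in>{u. cyc_adj l v u}. W (c (edge_idx l v u))) else 0))
         = of_real (W (c v) / (W (c p) + W (c v))) * G (c(v := Suc (c v)))
           + of_real (W (c p) / (W (c p) + W (c v))) * G (c(p := Suc (c p)))"
    (is "(\<Sum>w<l. ?F w) = _")
proof -
  define r where "r = Suc v mod l"
  note nb = cyc_vertex_neighbourhood[OF l3 vl, folded r_def p_def]
  have "(\<Sum>w<l. ?F w) = (\<Sum>w\<in>{r, p}. ?F w)"
    by (rule sum.mono_neutral_right) (use nb(1,2,5) in auto)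
  also have "\<dots> = ?F r + ?F p" using nb(3) by simp
  finally have two: "(\<Sum>w<l. ?F w) = ?F r + ?F p" .
  have "{u. cyc_adj l v u} = {r, p}" using nb(5) by auto
  then have den: "(\<Sum>u\<in>{u. cyc_adj l v u}. W (c (edge_idx l v u))) = W (c p) + W (c v)"
    using nb(3,6,7) by simp
  have bump_r: "(\<lambda>i. c i + (if {v, r} = cyc_edge l i then 1 else 0)) = c(v := Suc (c v))"
    and bump_p: "(\<lambda>i. c i + (if {v, p} = cyc_edge l i then 1 else 0)) = c(p := Suc (c p))"
    using nb(8,9) by auto
  have "?F r = of_real (W (c v) / (W (c p) + W (c v))) * G (c(v := Suc (c v)))"
    unfolding den bump_r using nb(5,6) by (simp add: mult.commute)
  moreover have "?F p = of_real (W (c p) / (W (c p) + W (c v))) * G (c(p := Suc (c p)))"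
    unfolding den bump_p using nb(5,7) by (simp add: mult.commute)
  ultimately show ?thesis using two by simp
qed

lemma tail_cf_prod_bump:
  assumes W: "\<forall>m. W m > 0" and "j < l"
  shows "exp_cf W t j (c j) * (\<Prod>i<l. tail_cf W t i ((c(j := Suc (c j))) i))
       = (\<Prod>i<l. tail_cf W t i (c i))"
proof -
  have "(\<Prod>i<l. tail_cf W t i ((c(j := Suc (c j))) i))
      = tail_cf W t j (Suc (c j)) * (\<Prod>i\<in>{..<l} - {j}. tail_cf W t i (c i))"
    using assms(2) by (simp add: prod.remove)
  moreover have "(\<Prod>i<l. tail_cf W t i (c i)) = tail_cf W t j (c j) * (\<Prod>i\<in>{..<l} - {j}. tail_cf W t i (c i))"
    using assms(2) by (simp add: prod.remove)
  ultimately show ?thesis by (simp add: tail_cf_step[OF W, of t j "c j"])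
qed

text \<open>The algebraic heart of the martingale property: leaving a vertex across the edge of weight
  \<open>b\<close> (resp. \<open>a\<close>) with probability \<open>b / (a + b)\<close> (resp. \<open>a / (a + b)\<close>) removes the factor
  \<open>b / (b + z)\<close> (resp. \<open>a / (a - z)\<close>), and these corrections average out to \<open>1\<close>.\<close>
lemma jump_average_identity:
  fixes a b z :: "'a::field"
  assumes "a \<noteq> 0" "b \<noteq> 0" "a + b \<noteq> 0"
  shows "b / (a + b) * ((b + z) / b) + a / (a + b) * ((a - z) / a) = 1"
  using assms by (simp add: divide_simps)

text \<open>With \<open>A, B\<close> the weights of the two edges at
  \<open>v\<close>, their current factors are \<open>A / (A - z)\<close> and \<open>B / (B + z)\<close>, since the edge signs are
  opposite on an even cycle.\<close>
lemma tail_cf_harmonic_at_vertex: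
  assumes W: "\<forall>m. W m > 0" and ev: "even l" and l4: "4 \<le> l" and vl: "v < l"
  shows "(\<Sum>w<l. (\<Prod>i<l. tail_cf W t i (c i + (if {v,w} = cyc_edge l i then 1 else 0))) *
            of_real (if cyc_adj l v w then W (c (edge_idx l v w)) /
               (\<Sum>u\<in>{u. cyc_adj l v u}. W (c (edge_idx l v u))) else 0))
         = (\<Prod>i<l. tail_cf W t i (c i))"
proof -
  define p where "p = (v + l - 1) mod l"
  have l3: "3 \<le> l" using l4 by simp
  note nb = cyc_vertex_neighbourhood[OF l3 vl, folded p_def]
  define A where "A = W (c p)"
  define B where "B = W (c v)"
  define z where "z = \<i> * of_real (t * (-1)^v)"
  define T where "T = (\<Prod>i<l. tail_cf W t i (c i))"
  have "A > 0" "B > 0" using W unfolding A_def B_def by auto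
  have fv: "exp_cf W t v (c v) = of_real B / (of_real B + z)"
    unfolding exp_cf_def B_def z_def by simp
  have fp: "exp_cf W t p (c p) = of_real A / (of_real A - z)"
    unfolding exp_cf_def A_def z_def nb(10)[OF ev] by simp
  have nz: "of_real A - z \<noteq> 0" "of_real B + z \<noteq> 0"
    using exp_cf_nonzero[of W "c p" t p] exp_cf_nonzero[of W "c v" t v] W unfolding fv fp by auto
  have Tv: "(\<Prod>i<l. tail_cf W t i ((c(v := Suc (c v))) i)) = T * ((of_real B + z) / of_real B)"
    using tail_cf_prod_bump[OF W vl, of t c] \<open>B > 0\<close> nz unfolding fv T_def
    by (simp add: field_simps)
  have Tp: "(\<Prod>i<l. tail_cf W t i ((c(p := Suc (c p))) i)) = T * ((of_real A - z) / of_real A)"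
    using tail_cf_prod_bump[OF W nb(2), of t c] \<open>A > 0\<close> nz unfolding fp T_def
    by (simp add: field_simps)
  have "of_real (B / (A + B)) * ((of_real B + z) / of_real B)
      + of_real (A / (A + B)) * ((of_real A - z) / of_real A) = (1 :: complex)"
  proof -
    have "of_real A \<noteq> (0 :: complex)" "of_real B \<noteq> (0 :: complex)" "of_real A + of_real B \<noteq> (0 :: complex)"
      using \<open>A > 0\<close> \<open>B > 0\<close> of_real_eq_0_iff[of "A + B"] by auto
    then show ?thesis using jump_average_identity[of "of_real A" "of_real B" z] by simp
  qed
  then have "of_real (B / (A + B)) * (T * ((of_real B + z) / of_real B))
      + of_real (A / (A + B)) * (T * ((of_real A - z) / of_real A)) = T"
    by (metis (no_types, lifting) distrib_left mult.left_commute mult.right_neutral)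
  then show ?thesis
    unfolding cyc_step_two_neighbours[OF l3 vl, where G = "\<lambda>c. \<Prod>i<l. tail_cf W t i (c i)", folded p_def]
    unfolding Tv Tp A_def [symmetric] B_def [symmetric] T_def [symmetric] by (simp add: add.commute)
qed

lemma errw_count_cong:
  assumes "\<And>j. j \<le> n \<Longrightarrow> h j = g j"
  shows "errw_count X0 l h n i = errw_count X0 l g n i"
proof -
  have "{j. j < n \<and> {h j, h (Suc j)} = cyc_edge l i} = {j. j < n \<and> {g j, g (Suc j)} = cyc_edge l i}"
    using assms by (auto simp: Suc_le_eq)
  then show ?thesis unfolding errw_count_def by simp
qed

lemma errw_count_Suc:
  "errw_count X0 l h (Suc n) i
     = errw_count X0 l h n i + (if {h n, h (Suc n)} = cyc_edge l i then 1 else 0)"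
proof -
  let ?Q = "\<lambda>j. {h j, h (Suc j)} = cyc_edge l i"
  have "{j. j < Suc n \<and> ?Q j} = (if ?Q n then insert n {j. j < n \<and> ?Q j} else {j. j < n \<and> ?Q j})"
    by (auto simp: less_Suc_eq)
  then show ?thesis unfolding errw_count_def by (simp add: card_insert_if)
qed

lemma errw_trans_cong:
  assumes "\<And>j. j \<le> n \<Longrightarrow> h j = g j"
  shows "errw_trans W X0 l h n w = errw_trans W X0 l g n w"
  unfolding errw_trans_def using errw_count_cong[OF assms] assms[OF order_refl] by simp

definition errw_cf :: "(nat \<Rightarrow> real) \<Rightarrow> (nat \<Rightarrow> nat) \<Rightarrow> nat \<Rightarrow> real \<Rightarrow> nat \<Rightarrow> (nat \<Rightarrow> nat) \<Rightarrow> complex" where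
  "errw_cf W X0 l t n h = (\<Prod>i<l. tail_cf W t i (errw_count X0 l h n i))"

lemma errw_cf_cong:
  assumes "\<And>j. j \<le> n \<Longrightarrow> h j = g j"
  shows "errw_cf W X0 l t n h = errw_cf W X0 l t n g"
  unfolding errw_cf_def using errw_count_cong[OF assms] by simp

lemma errw_cf_norm_le_1:
  assumes "\<forall>m. W m > 0" "summable (\<lambda>m. 1 / W m)"
  shows "cmod (errw_cf W X0 l t n h) \<le> 1"
  unfolding errw_cf_def prod_norm[symmetric]
  by (intro prod_le_1) (use tail_cf_norm_le_1[OF assms] in auto)

lemma errw_cf_harmonic:
  assumes W: "\<forall>m. W m > 0" and k: "2 \<le> k" and hn: "h n < 2 * k"
  shows "(\<Sum>w<2 * k. errw_cf W X0 (2 * k) t (Suc n) (h(Suc n := w)) * of_real (errw_trans W X0 (2 * k) h n w))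
         = errw_cf W X0 (2 * k) t n h"
proof -
  have "errw_count X0 l (h(Suc n := w)) (Suc n) i
      = errw_count X0 l h n i + (if {h n, w} = cyc_edge l i then 1 else 0)" for l w i
    unfolding errw_count_Suc using errw_count_cong[of n "h(Suc n := w)" h] by simp
  then show ?thesis
    unfolding errw_cf_def errw_trans_def
    by (simp only:) (rule tail_cf_harmonic_at_vertex[OF W _ _ hn], use k in auto)
qed

locale path_chain = prob_space M for M :: "'a measure" +
  fixes I :: "nat \<Rightarrow> 'a \<Rightarrow> nat" and l :: nat
    and p :: "(nat \<Rightarrow> nat) \<Rightarrow> nat \<Rightarrow> nat \<Rightarrow> real" and v0 :: nat
  assumes I_measurable: "\<And>n. I n \<in> measurable M (count_space UNIV)"
    and start: "AE \<omega> in M. I 0 \<omega> = v0"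
    and start_in_range: "v0 < l"
    and p_cong: "\<And>h g n w. (\<And>j. j \<le> n \<Longrightarrow> h j = g j) \<Longrightarrow> p h n w = p g n w"
    and p_out_of_range: "\<And>h n w. l \<le> w \<Longrightarrow> p h n w = 0"
    and cylinder_step: "\<And>n h w. measure M {\<omega>\<in>space M. (\<forall>j\<le>n. I j \<omega> = h j) \<and> I (Suc n) \<omega> = w}
               = p h n w * measure M {\<omega>\<in>space M. \<forall>j\<le>n. I j \<omega> = h j}"
begin

definition cylinder :: "nat \<Rightarrow> (nat \<Rightarrow> nat) \<Rightarrow> 'a set" where
  "cylinder n h = {\<omega>\<in>space M. \<forall>j\<le>n. I j \<omega> = h j}"

lemma I_measurable' [measurable]: "I n \<in> M \<rightarrow>\<^sub>M count_space UNIV"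
  using I_measurable by auto

lemma cylinder_sets [measurable]: "cylinder n h \<in> sets M"
  unfolding cylinder_def by measurable

lemma measure_cylinder_Suc:
  "measure M (cylinder (Suc n) (h(Suc n := w))) = p h n w * measure M (cylinder n h)"
proof -
  have "cylinder (Suc n) (h(Suc n := w)) = {\<omega>\<in>space M. (\<forall>j\<le>n. I j \<omega> = h j) \<and> I (Suc n) \<omega> = w}"
    unfolding cylinder_def by (auto simp: le_Suc_eq)
  then show ?thesis using cylinder_step unfolding cylinder_def by simp
qed

text \<open>The chain almost surely never leaves the vertex set \<open>{..<l}\<close>: a jump to \<open>w \<ge> l\<close>
  has probability zero from each of the countably many histories.\<close>
lemma in_range_AE: "AE \<omega> in M. \<forall>j. I j \<omega> < l"
proof -
  have "AE \<omega> in M. I (Suc n) \<omega> \<noteq> w" if "l \<le> w" for n w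
  proof -
    let ?H = "Pi\<^sub>E {..n} (\<lambda>_. UNIV :: nat set)"
    have "cylinder (Suc n) (h(Suc n := w)) \<in> null_sets M" for h
      using measure_cylinder_Suc[of n h w] p_out_of_range[OF that]
      by (simp add: null_sets_def emeasure_eq_measure)
    then have null: "(\<Union>h\<in>?H. cylinder (Suc n) (h(Suc n := w))) \<in> null_sets M"
      by (intro null_sets_UN') (auto intro: countable_PiE)
    have "{\<omega>\<in>space M. \<not> I (Suc n) \<omega> \<noteq> w} \<subseteq> (\<Union>h\<in>?H. cylinder (Suc n) (h(Suc n := w)))"
    proof
      fix \<omega> assume "\<omega> \<in> {\<omega>\<in>space M. \<not> I (Suc n) \<omega> \<noteq> w}"
      then have "\<omega> \<in> cylinder (Suc n) ((restrict (\<lambda>j. I j \<omega>) {..n})(Suc n := w))"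
        unfolding cylinder_def by (auto simp: le_Suc_eq)
      moreover have "restrict (\<lambda>j. I j \<omega>) {..n} \<in> ?H" by simp
      ultimately show "\<omega> \<in> (\<Union>h\<in>?H. cylinder (Suc n) (h(Suc n := w)))" by blast
    qed
    then show ?thesis by (rule AE_I'[OF null])
  qed
  then have "AE \<omega> in M. \<forall>w. l \<le> w \<longrightarrow> I (Suc n) \<omega> \<noteq> w" for n
    by (subst AE_all_countable) auto
  then have "AE \<omega> in M. I (Suc n) \<omega> < l" for n
    by (rule AE_mp) (auto simp: not_less[symmetric])
  moreover have "AE \<omega> in M. I 0 \<omega> < l"
    using start by (rule AE_mp) (auto simp: start_in_range)
  ultimately show ?thesis
    by (subst AE_all_countable) (metis not0_implies_Suc)
qed

definition paths :: "nat \<Rightarrow> (nat \<Rightarrow> nat) set" where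
  "paths n = Pi\<^sub>E {..n} (\<lambda>_. {..<l})"

lemma finite_paths: "finite (paths n)"
  unfolding paths_def by (intro finite_PiE) auto

lemma history_functional_measurable:
  assumes "\<And>h g. (\<And>j. j \<le> n \<Longrightarrow> h j = g j) \<Longrightarrow> G h = G g"
  shows "(\<lambda>\<omega>. G (\<lambda>j. I j \<omega>) :: real) \<in> borel_measurable M"
proof -
  let ?H = "Pi\<^sub>E {..n} (\<lambda>_. UNIV :: nat set)"
  have "(\<lambda>\<omega>. restrict (\<lambda>j. I j \<omega>) {..n}) \<in> measurable M (count_space ?H)"
  proof (subst measurable_count_space_eq_countable)
    have "(\<lambda>\<omega>. restrict (\<lambda>j. I j \<omega>) {..n}) -` {h} \<inter> space M = cylinder n h" if "h \<in> ?H" for h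
      using that unfolding cylinder_def by (auto simp: PiE_def extensional_def fun_eq_iff)
    then show "(\<lambda>\<omega>. restrict (\<lambda>j. I j \<omega>) {..n}) \<in> space M \<rightarrow> ?H \<and>
      (\<forall>h\<in>?H. (\<lambda>\<omega>. restrict (\<lambda>j. I j \<omega>) {..n}) -` {h} \<inter> space M \<in> sets M)"
      by auto
  qed (auto intro: countable_PiE)
  moreover have "(\<lambda>\<omega>. G (\<lambda>j. I j \<omega>)) = G \<circ> (\<lambda>\<omega>. restrict (\<lambda>j. I j \<omega>) {..n})"
    unfolding comp_def by (intro ext assms) simp
  ultimately show ?thesis by (simp add: measurable_comp)
qed

text \<open>Almost surely the history lies in exactly one of the finitely many cylinders,
  so the expectation of a history functional is a finite sum over paths.\<close>
lemma expectation_as_path_sum: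
  assumes "\<And>h g. (\<And>j. j \<le> n \<Longrightarrow> h j = g j) \<Longrightarrow> G h = G g"
  shows "integral\<^sup>L M (\<lambda>\<omega>. G (\<lambda>j. I j \<omega>)) = (\<Sum>h\<in>paths n. G h * measure M (cylinder n h))"
proof -
  have "AE \<omega> in M. G (\<lambda>j. I j \<omega>) = (\<Sum>h\<in>paths n. G h * indicator (cylinder n h) \<omega>)"
    using in_range_AE
  proof (rule AE_mp, intro AE_I2 impI)
    fix \<omega> assume \<omega>: "\<omega> \<in> space M" and range: "\<forall>j. I j \<omega> < l"
    define h0 where "h0 = restrict (\<lambda>j. I j \<omega>) {..n}"
    have h0: "h0 \<in> paths n" unfolding h0_def paths_def using range by auto
    have "\<omega> \<in> cylinder n h \<longleftrightarrow> h = h0" if "h \<in> paths n" for h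
      using that \<omega> unfolding cylinder_def h0_def paths_def
      by (auto simp: PiE_def extensional_def fun_eq_iff)
    then have "(\<Sum>h\<in>paths n. G h * indicator (cylinder n h) \<omega>) = (\<Sum>h\<in>paths n. if h = h0 then G h else 0)"
      by (intro sum.cong) auto
    also have "\<dots> = G (\<lambda>j. I j \<omega>)"
      using h0 finite_paths assms[of h0 "\<lambda>j. I j \<omega>"] unfolding h0_def by simp
    finally show "G (\<lambda>j. I j \<omega>) = (\<Sum>h\<in>paths n. G h * indicator (cylinder n h) \<omega>)" ..
  qed
  then have "integral\<^sup>L M (\<lambda>\<omega>. G (\<lambda>j. I j \<omega>))
      = integral\<^sup>L M (\<lambda>\<omega>. \<Sum>h\<in>paths n. G h * indicator (cylinder n h) \<omega>)"
    by (intro integral_cong_AE history_functional_measurable assms) auto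
  also have "\<dots> = (\<Sum>h\<in>paths n. G h * measure M (cylinder n h))"
    by (subst Bochner_Integration.integral_sum) (auto intro!: integrable_real_indicator simp: less_top[symmetric])
  finally show ?thesis .
qed

lemma harmonic_expectation:
  fixes G :: "nat \<Rightarrow> (nat \<Rightarrow> nat) \<Rightarrow> real"
  assumes G_cong: "\<And>n h g. (\<And>j. j \<le> n \<Longrightarrow> h j = g j) \<Longrightarrow> G n h = G n g"
    and harmonic: "\<And>n h. h n < l \<Longrightarrow> (\<Sum>w<l. G (Suc n) (h(Suc n := w)) * p h n w) = G n h"
  shows "integral\<^sup>L M (\<lambda>\<omega>. G n (\<lambda>j. I j \<omega>)) = G 0 (\<lambda>_. v0)"
proof -
  have paths_Suc: "paths (Suc n) = (\<lambda>(w, h). h(Suc n := w)) ` ({..<l} \<times> paths n)"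
    and inj: "inj_on (\<lambda>(w, h). h(Suc n := w)) ({..<l} \<times> paths n)" for n
    unfolding paths_def atMost_Suc by (rule PiE_insert_eq, rule inj_combinator) simp
  define S where "S n = (\<Sum>h\<in>paths n. G n h * measure M (cylinder n h))" for n
  have "S (Suc n) = S n" for n
  proof -
    have "S (Suc n) = (\<Sum>(w, h)\<in>{..<l} \<times> paths n.
        G (Suc n) (h(Suc n := w)) * measure M (cylinder (Suc n) (h(Suc n := w))))"
      unfolding S_def paths_Suc by (subst sum.reindex[OF inj]) (simp add: case_prod_unfold)
    also have "\<dots> = (\<Sum>h\<in>paths n. (\<Sum>w<l. G (Suc n) (h(Suc n := w)) * p h n w) * measure M (cylinder n h))"
      unfolding sum.cartesian_product[symmetric] measure_cylinder_Suc
      by (subst sum.swap) (simp add: sum_distrib_right mult.assoc)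
    also have "\<dots> = S n"
      unfolding S_def by (intro sum.cong refl) (simp add: harmonic paths_def PiE_iff)
    finally show ?thesis .
  qed
  then have "S n = S 0" by (induction n) simp_all
  moreover have "integral\<^sup>L M (\<lambda>\<omega>. G m (\<lambda>j. I j \<omega>)) = S m" for m
    unfolding S_def by (rule expectation_as_path_sum) (rule G_cong)
  ultimately have "integral\<^sup>L M (\<lambda>\<omega>. G n (\<lambda>j. I j \<omega>)) = integral\<^sup>L M (\<lambda>\<omega>. G 0 (\<lambda>j. I j \<omega>))"
    by simp
  also have "\<dots> = integral\<^sup>L M (\<lambda>_. G 0 (\<lambda>_. v0))"
  proof (intro integral_cong_AE history_functional_measurable G_cong)
    show "AE \<omega> in M. G 0 (\<lambda>j. I j \<omega>) = G 0 (\<lambda>_. v0)"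
      using start by eventually_elim (auto intro: G_cong)
  qed auto
  also have "\<dots> = G 0 (\<lambda>_. v0)" by (simp add: prob_space)
  finally show ?thesis .
qed

end

lemma tendsto_at_prefix_count:
  fixes g :: "nat \<Rightarrow> 'b::topological_space"
  assumes g: "g \<longlonglongrightarrow> c"
  shows "(\<lambda>n. g (x0 + card {j. j < n \<and> Q j}))
           \<longlonglongrightarrow> (if infinite {j. Q j} then c else g (x0 + card {j. Q j}))"
proof (cases "finite {j. Q j}")
  case True
  then obtain N where N: "{j. Q j} \<subseteq> {..<N}" using finite_nat_bounded by blast
  have "{j. j < n \<and> Q j} = {j. Q j}" if "N \<le> n" for n
    using N that by auto
  then have "\<forall>\<^sub>F n in sequentially. g (x0 + card {j. j < n \<and> Q j}) = g (x0 + card {j. Q j})"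
    unfolding eventually_sequentially by (intro exI[of _ N]) auto
  then show ?thesis using True by (simp add: tendsto_eventually)
next
  case False
  have "filterlim (\<lambda>n. x0 + card {j. j < n \<and> Q j}) at_top sequentially"
    unfolding filterlim_at_top
  proof
    fix Z :: nat
    obtain B where B: "finite B" "card B = Z" "B \<subseteq> {j. Q j}"
      using infinite_arbitrarily_large[OF False] by blast
    obtain N where N: "B \<subseteq> {..<N}" using finite_nat_bounded[OF B(1)] by blast
    have "Z \<le> x0 + card {j. j < n \<and> Q j}" if "N \<le> n" for n
    proof -
      have "B \<subseteq> {j. j < n \<and> Q j}" using N B(3) that by auto
      then show ?thesis using B(2) card_mono[of "{j. j < n \<and> Q j}" B] by simp
    qed
    then show "\<forall>\<^sub>F n in sequentially. Z \<le> x0 + card {j. j < n \<and> Q j}"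
      unfolding eventually_sequentially by blast
  qed
  then show ?thesis using False filterlim_compose[OF g] by simp
qed

lemma prod_tendsto_0_by_factor:
  fixes f :: "nat \<Rightarrow> nat \<Rightarrow> 'b::real_normed_field"
  assumes "finite A" "i \<in> A" "\<And>N j. j \<in> A \<Longrightarrow> norm (f N j) \<le> 1"
    and "(\<lambda>N. f N i) \<longlonglongrightarrow> 0"
  shows "(\<lambda>N. \<Prod>j\<in>A. f N j) \<longlonglongrightarrow> 0"
proof (rule Lim_null_comparison)
  have "norm (\<Prod>j\<in>A. f N j) = norm (f N i) * (\<Prod>j\<in>A - {i}. norm (f N j))" for N
    using assms(1,2) by (simp add: prod.remove norm_mult prod_norm)
  also have "\<dots> N \<le> norm (f N i)" for N
    using assms(3) by (intro mult_right_le_one_le prod_le_1 prod_nonneg) auto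
  finally show "\<forall>\<^sub>F N in sequentially. norm (\<Prod>j\<in>A. f N j) \<le> norm (f N i)" by simp
  show "(\<lambda>N. norm (f N i)) \<longlonglongrightarrow> 0" using assms(4) by (simp add: tendsto_norm_zero)
qed

locale errw_even_cycle =
  fixes M :: "'a measure" and I :: "nat \<Rightarrow> 'a \<Rightarrow> nat"
    and W :: "nat \<Rightarrow> real" and X0 :: "nat \<Rightarrow> nat" and k v0 :: nat
  assumes prob: "prob_space M"
    and k2: "k \<ge> 2"
    and W_pos: "\<forall>m. W m > 0"
    and W_summable: "summable (\<lambda>m. 1 / W m)"
    and v0: "v0 < 2 * k"
    and I_meas: "\<forall>n. I n \<in> measurable M (count_space UNIV)"
    and I0: "AE \<omega> in M. I 0 \<omega> = v0"
    and transition: "\<forall>n h w. measure M {\<omega>\<in>space M. (\<forall>j\<le>n. I j \<omega> = h j) \<and> I (Suc n) \<omega> = w}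
               = errw_trans W X0 (2 * k) h n w * measure M {\<omega>\<in>space M. \<forall>j\<le>n. I j \<omega> = h j}"
begin

sublocale path_chain M I "2 * k" "errw_trans W X0 (2 * k)" v0
proof (intro path_chain.intro path_chain_axioms.intro prob)
  show "I n \<in> measurable M (count_space UNIV)" for n using I_meas by simp
  show "AE \<omega> in M. I 0 \<omega> = v0" by (rule I0)
  show "v0 < 2 * k" by (rule v0)
  show "errw_trans W X0 (2 * k) h n w = errw_trans W X0 (2 * k) g n w"
    if "\<And>j. j \<le> n \<Longrightarrow> h j = g j" for h g n w
    by (rule errw_trans_cong[OF that])
  show "errw_trans W X0 (2 * k) h n w = 0" if "2 * k \<le> w" for h n w
    using that unfolding errw_trans_def cyc_adj_def by simp
  show "measure M {\<omega>\<in>space M. (\<forall>j\<le>n. I j \<omega> = h j) \<and> I (Suc n) \<omega> = w}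
      = errw_trans W X0 (2 * k) h n w * measure M {\<omega>\<in>space M. \<forall>j\<le>n. I j \<omega> = h j}" for n h w
    using transition by blast
qed

abbreviation l :: nat where "l \<equiv> 2 * k"

definition crossings :: "nat \<Rightarrow> 'a \<Rightarrow> nat set" where
  "crossings i \<omega> = {j. {I j \<omega>, I (Suc j) \<omega>} = cyc_edge l i}"

definition recurrent :: "'a set" where
  "recurrent = {\<omega>. \<forall>i<l. infinite (crossings i \<omega>)}"

definition initial_cf :: "real \<Rightarrow> complex" where
  "initial_cf t = (\<Prod>i<l. tail_cf W t i (X0 i))"

definition limit_cf :: "real \<Rightarrow> 'a \<Rightarrow> complex" where
  "limit_cf t \<omega> = (\<Prod>i<l. if infinite (crossings i \<omega>) then 1
                          else tail_cf W t i (X0 i + card (crossings i \<omega>)))"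

lemma errw_cf_tendsto_limit_cf: "(\<lambda>n. errw_cf W X0 l t n (\<lambda>j. I j \<omega>)) \<longlonglongrightarrow> limit_cf t \<omega>"
  unfolding errw_cf_def limit_cf_def errw_count_def crossings_def
  by (intro tendsto_prod tendsto_at_prefix_count tail_cf_tendsto_1[OF W_pos W_summable])

lemma errw_cf_measurable [measurable]:
  "(\<lambda>\<omega>. Re (errw_cf W X0 l t n (\<lambda>j. I j \<omega>))) \<in> borel_measurable M"
proof (rule history_functional_measurable)
  show "Re (errw_cf W X0 l t n h) = Re (errw_cf W X0 l t n g)" if "\<And>j. j \<le> n \<Longrightarrow> h j = g j" for h g
    using errw_cf_cong[OF that] by simp
qed

lemma limit_cf_measurable [measurable]: "(\<lambda>\<omega>. Re (limit_cf t \<omega>)) \<in> borel_measurable M"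
  by (rule borel_measurable_LIMSEQ_real[OF tendsto_Re[OF errw_cf_tendsto_limit_cf] errw_cf_measurable])

lemma limit_cf_norm_le_1: "cmod (limit_cf t \<omega>) \<le> 1"
  unfolding limit_cf_def prod_norm[symmetric]
  by (intro prod_le_1) (auto simp: tail_cf_norm_le_1[OF W_pos W_summable])

lemma expectation_errw_cf:
  "integral\<^sup>L M (\<lambda>\<omega>. Re (errw_cf W X0 l t n (\<lambda>j. I j \<omega>))) = Re (initial_cf t)"
proof -
  have "integral\<^sup>L M (\<lambda>\<omega>. Re (errw_cf W X0 l t n (\<lambda>j. I j \<omega>))) = Re (errw_cf W X0 l t 0 (\<lambda>_. v0))"
  proof (rule harmonic_expectation)
    show "Re (errw_cf W X0 l t n h) = Re (errw_cf W X0 l t n g)" if "\<And>j. j \<le> n \<Longrightarrow> h j = g j" for n h g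
      using errw_cf_cong[OF that] by simp
    show "(\<Sum>w<l. Re (errw_cf W X0 l t (Suc n) (h(Suc n := w))) * errw_trans W X0 l h n w)
        = Re (errw_cf W X0 l t n h)" if "h n < l" for n h
      using arg_cong[OF errw_cf_harmonic[where k = k and ?X0.0 = X0 and t = t and h = h and n = n, OF W_pos k2 that], of Re]
      by (simp add: Re_sum)
  qed
  then show ?thesis unfolding errw_cf_def initial_cf_def errw_count_def by simp
qed

lemma expectation_limit_cf: "integral\<^sup>L M (\<lambda>\<omega>. Re (limit_cf t \<omega>)) = Re (initial_cf t)"
proof -
  have "(\<lambda>n. integral\<^sup>L M (\<lambda>\<omega>. Re (errw_cf W X0 l t n (\<lambda>j. I j \<omega>))))
          \<longlonglongrightarrow> integral\<^sup>L M (\<lambda>\<omega>. Re (limit_cf t \<omega>))"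
  proof (rule integral_dominated_convergence[where w = "\<lambda>_. 1"])
    show "AE \<omega> in M. norm (Re (errw_cf W X0 l t n (\<lambda>j. I j \<omega>))) \<le> 1" for n
      using abs_Re_le_cmod errw_cf_norm_le_1[OF W_pos W_summable] order_trans by (auto, blast)
    show "AE \<omega> in M. (\<lambda>n. Re (errw_cf W X0 l t n (\<lambda>j. I j \<omega>))) \<longlonglongrightarrow> Re (limit_cf t \<omega>)"
      by (intro AE_I2 tendsto_Re errw_cf_tendsto_limit_cf)
  qed auto
  then show ?thesis unfolding expectation_errw_cf by (simp add: LIMSEQ_const_iff)
qed

lemma limit_cf_tendsto_indicator: "(\<lambda>N. Re (limit_cf (real N) \<omega>)) \<longlonglongrightarrow> indicator recurrent \<omega>"
proof (cases "\<omega> \<in> recurrent")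
  case True
  then show ?thesis unfolding limit_cf_def recurrent_def by simp
next
  case False
  then obtain i where i: "i < l" "finite (crossings i \<omega>)" unfolding recurrent_def by auto
  have "(\<lambda>N. limit_cf (real N) \<omega>) \<longlonglongrightarrow> 0"
    unfolding limit_cf_def
    by (rule prod_tendsto_0_by_factor[of _ i])
       (use i tail_cf_decay[OF W_pos W_summable] tail_cf_norm_le_1[OF W_pos W_summable] in auto)
  then show ?thesis using False tendsto_Re[of _ 0] by fastforce
qed

lemma initial_cf_tendsto_0: "(\<lambda>N. initial_cf (real N)) \<longlonglongrightarrow> 0"
  unfolding initial_cf_def using k2
  by (intro prod_tendsto_0_by_factor[of _ 0] tail_cf_decay[OF W_pos W_summable])
     (auto simp: tail_cf_norm_le_1[OF W_pos W_summable])

lemma recurrent_null: "measure M (recurrent \<inter> space M) = 0"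
proof -
  have "(\<lambda>N. integral\<^sup>L M (\<lambda>\<omega>. Re (limit_cf (real N) \<omega>))) \<longlonglongrightarrow> integral\<^sup>L M (indicator recurrent)"
    by (rule integral_dominated_convergence[where w = "\<lambda>_. 1"])
       (auto intro: limit_cf_tendsto_indicator abs_Re_le_cmod[THEN order_trans] limit_cf_norm_le_1
             borel_measurable_LIMSEQ_real[OF limit_cf_tendsto_indicator limit_cf_measurable])
  then have "(\<lambda>N. Re (initial_cf (real N))) \<longlonglongrightarrow> measure M (recurrent \<inter> space M)"
    by (simp add: expectation_limit_cf)
  moreover have "(\<lambda>N. Re (initial_cf (real N))) \<longlonglongrightarrow> 0"
    using tendsto_Re[OF initial_cf_tendsto_0] by simp
  ultimately show ?thesis by (rule LIMSEQ_unique)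
qed

end

theorem mainTheorem3:
  fixes M :: "'a measure" and I :: "nat \<Rightarrow> 'a \<Rightarrow> nat"
    and W :: "nat \<Rightarrow> real" and X0 :: "nat \<Rightarrow> nat" and k v0 :: nat
  assumes "prob_space M"
    and "k \<ge> 2"
    and "\<forall>m. W m > 0"
    and "summable (\<lambda>m. 1 / W m)"
    and "v0 < 2 * k"
    and "\<forall>n. I n \<in> measurable M (count_space UNIV)"
    and "AE \<omega> in M. I 0 \<omega> = v0"
    and "\<forall>n h w. measure M {\<omega>\<in>space M. (\<forall>j\<le>n. I j \<omega> = h j) \<and> I (Suc n) \<omega> = w}
               = errw_trans W X0 (2 * k) h n w * measure M {\<omega>\<in>space M. \<forall>j\<le>n. I j \<omega> = h j}"
  shows "measure M {\<omega>\<in>space M. \<forall>i < 2 * k.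
            \<exists>\<^sub>\<infinity>n. {I n \<omega>, I (Suc n) \<omega>} = cyc_edge (2 * k) i} = 0"
proof -
  interpret errw_even_cycle M I W X0 k v0
    using assms by (rule errw_even_cycle.intro)
  have "{\<omega>\<in>space M. \<forall>i < 2 * k. \<exists>\<^sub>\<infinity>n. {I n \<omega>, I (Suc n) \<omega>} = cyc_edge (2 * k) i}
      = recurrent \<inter> space M"
    unfolding recurrent_def crossings_def INFM_iff_infinite by auto
  then show ?thesis using recurrent_null by simp
qed

end
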